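(* Let $K$ be a finite index subgroup of $F_2$. Then for any $h\in\Xi$ and any $z\in F_2$, \[ \lim_{n\to\infty} d_n^h(zK)=\frac{1}{[F_2:K]}. \]
   Context: $F_2$ is the free group on $a,b$ and $\Xi=\{a,b,a^{-1},b^{-1}\}$; $S_n$ is the set of elements of $F_2$ whose reduced word in $\Xi$ has length $n$. For $A\subseteq F_2$, $h\in\Xi$ and $n\geq1$, define $d_n^h(A)=\frac{1}{2}\left(\frac{|A\cap S_n|}{|S_n|}+\frac{|A\cap hS_n|}{|S_n|}\right)$, where $hS_n=\{hg:g\in S_n\}$. *)

theory Defs
  imports Complex_Main
begin

text \<open>The free group F_2 on a, b, realised as reduced words over the alphabet
  Xi = {a, b, a^-1, b^-1}. A letter (g, e) is generator a (g = False) or b (g = True),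
  with e = True meaning the inverse letter. Thus Xi is the whole type letter.\<close>

type_synonym letter = "bool \<times> bool"

definition inv_letter :: "letter \<Rightarrow> letter" where
  "inv_letter x = (fst x, \<not> snd x)"

definition reduced :: "letter list \<Rightarrow> bool" where
  "reduced w \<longleftrightarrow> (\<forall>i. Suc i < length w \<longrightarrow> w ! Suc i \<noteq> inv_letter (w ! i))"

definition F2 :: "letter list set" where
  "F2 = {w. reduced w}"

definition mul_letter :: "letter \<Rightarrow> letter list \<Rightarrow> letter list" where
  "mul_letter x w = (case w of [] \<Rightarrow> [x] | y # ws \<Rightarrow> (if y = inv_letter x then ws else x # w))"

definition mul :: "letter list \<Rightarrow> letter list \<Rightarrow> letter list" where
  "mul u v = foldr mul_letter u v"

definition inv :: "letter list \<Rightarrow> letter list" where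
  "inv w = rev (map inv_letter w)"

definition is_subgroup :: "letter list set \<Rightarrow> bool" where
  "is_subgroup K \<longleftrightarrow> K \<subseteq> F2 \<and> [] \<in> K \<and> (\<forall>x\<in>K. \<forall>y\<in>K. mul x y \<in> K) \<and> (\<forall>x\<in>K. inv x \<in> K)"

definition lcoset :: "letter list \<Rightarrow> letter list set \<Rightarrow> letter list set" where
  "lcoset z K = mul z ` K"

definition lcosets :: "letter list set \<Rightarrow> letter list set set" where
  "lcosets K = {lcoset z K | z. z \<in> F2}"

definition index :: "letter list set \<Rightarrow> nat" where
  "index K = card (lcosets K)"

definition sphere :: "nat \<Rightarrow> letter list set" where
  "sphere n = {w \<in> F2. length w = n}"

definition dens :: "nat \<Rightarrow> letter \<Rightarrow> letter list set \<Rightarrow> real" where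
  "dens n h A = (1/2) * (real (card (A \<inter> sphere n)) / real (card (sphere n))
                 + real (card (A \<inter> mul [h] ` sphere n)) / real (card (sphere n)))"

end

theory Submission
  imports Defs "HOL-Library.FuncSet" "HOL-Library.Indicator_Function"
begin

text \<open>
  F_2 acts by left multiplication on the finite set C of left cosets of K. Read from its last
  letter to its first, a reduced word performs a non-backtracking walk on the Schreier graph
  of C, and the pair (coset, first letter) is a Markov chain. Words acting trivially on C exist
  in every large even length, so two states of the same parity can be coupled after a bounded
  number of steps; Doeblin's contraction then shows that the share of S_n lying in a coset c
  converges along even n and along odd n, to p_0(c) and p_1(c) say. Counting how the spheres
  S_(n-1), S_n, S_(n+1) meet the neighbouring cosets gives sum_x p_0(x c) = 4 p_1(c) and
  sum_x p_1(x c) = 4 p_0(c). By the maximum principle p_0 + p_1 is constant and p_0 - p_1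
  changes sign along every edge. As d_n^h(c) averages the shares of c and h^-1 c, its even and
  odd limits both equal (p_0 + p_1)/2 = 1/[F_2 : K].
\<close>

lemma nat_eq_linear_combination:
  fixes q N :: nat
  assumes "q \<ge> 1" "q * (3 * q + 1) \<le> N"
  shows "\<exists>a b. N = q * (a + 1) + (3 * q + 1) * b"
proof -
  define b where "b = N mod q"
  define a where "a = N div q - 3 * b - 1"
  have "b < q" "3 * q + 1 \<le> N div q"
    using assms by (simp_all add: b_def less_eq_div_iff_mult_less_eq mult.commute)
  then have "N div q = a + 1 + 3 * b"
    by (simp add: a_def)
  moreover have "N = q * (N div q) + b"
    by (simp add: b_def)
  ultimately have "N = q * (a + 1) + (3 * q + 1) * b"
    by (simp add: algebra_simps)
  then show ?thesis by blast
qed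

lemma LIMSEQ_even_odd:
  fixes f :: "nat \<Rightarrow> 'a::metric_space"
  assumes "(\<lambda>i. f (2 * i)) \<longlonglongrightarrow> l" and "(\<lambda>i. f (2 * i + 1)) \<longlonglongrightarrow> l"
  shows "f \<longlonglongrightarrow> l"
proof (rule tendstoI)
  fix e :: real assume "e > 0"
  then obtain N where "\<forall>i\<ge>N. dist (f (2 * i)) l < e" "\<forall>i\<ge>N. dist (f (2 * i + 1)) l < e"
    using assms[THEN tendstoD] unfolding eventually_sequentially
    by (metis (no_types, lifting) nle_le order_trans)
  then have "dist (f n) l < e" if "n \<ge> 2 * N" for n
    using that by (cases "even n") (auto elim!: evenE oddE)
  then show "\<forall>\<^sub>F n in sequentially. dist (f n) l < e"
    unfolding eventually_sequentially by blast
qed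

lemma LIMSEQ_parity:
  assumes "(\<lambda>i. a (2 * i + r mod 2)) \<longlonglongrightarrow> l"
  shows "(\<lambda>i. a (2 * i + r)) \<longlonglongrightarrow> l"
proof -
  have "(\<lambda>i. a (2 * (i + r div 2) + r mod 2)) \<longlonglongrightarrow> l"
    using LIMSEQ_ignore_initial_segment[OF assms] .
  then show ?thesis
    by (simp add: algebra_simps)
qed

lemma sum_eq_card_mult_bound_imp_eq:
  fixes f :: "'a \<Rightarrow> real"
  assumes "finite A" "\<And>x. x \<in> A \<Longrightarrow> f x \<le> t" "sum f A = real (card A) * t" "x \<in> A"
  shows "f x = t"
proof -
  have "(\<Sum>x\<in>A. t - f x) = 0"
    using assms(3) by (simp add: sum_subtractf)
  then show ?thesis
    using sum_nonneg_eq_0_iff[OF assms(1), of "\<lambda>x. t - f x"] assms(2,4) by force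
qed

lemma abs_mean_diff_le:
  fixes F G :: "'a \<Rightarrow> real"
  assumes "finite A" "finite B" "A \<noteq> {}" "B \<noteq> {}" and "\<forall>a\<in>A. \<forall>b\<in>B. \<bar>F a - G b\<bar> \<le> r"
  shows "\<bar>sum F A / card A - sum G B / card B\<bar> \<le> r"
proof -
  have pos: "card A > 0" "card B > 0"
    using assms(1-4) by (simp_all add: card_gt_0_iff)
  have "(\<Sum>a\<in>A. \<Sum>b\<in>B. F a - G b) = card B * sum F A - card A * sum G B"
    by (simp add: sum_subtractf sum_distrib_right[symmetric] mult.commute)
  then have eq: "sum F A / card A - sum G B / card B = (\<Sum>a\<in>A. \<Sum>b\<in>B. F a - G b) / (card A * card B)"
    using pos by (simp add: field_simps)
  have "\<bar>\<Sum>a\<in>A. \<Sum>b\<in>B. F a - G b\<bar> \<le> (\<Sum>a\<in>A. \<Sum>b\<in>B. \<bar>F a - G b\<bar>)"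
    by (rule order_trans[OF sum_abs sum_mono]) (rule sum_abs)
  also have "\<dots> \<le> (\<Sum>a\<in>A. \<Sum>b\<in>B. r)"
    using assms(5) by (intro sum_mono) auto
  finally show ?thesis
    using pos by (simp add: eq pos_divide_le_eq mult_ac)
qed

section \<open>Reduced words\<close>

lemma inv_letter_inv_letter [simp]: "inv_letter (inv_letter x) = x"
  by (simp add: inv_letter_def)

lemma inv_letter_neq [simp]: "inv_letter x \<noteq> x" "x \<noteq> inv_letter x"
  by (cases x; simp add: inv_letter_def)+

lemma inv_letter_eq_iff [simp]: "inv_letter x = inv_letter y \<longleftrightarrow> x = y"
  by (metis inv_letter_inv_letter)

lemma eq_inv_letter_commute: "x = inv_letter y \<longleftrightarrow> y = inv_letter x"
  by (metis inv_letter_inv_letter)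

lemma card_UNIV_letter: "card (UNIV :: letter set) = 4"
  by (simp add: UNIV_Times_UNIV[symmetric] card_cartesian_product del: UNIV_Times_UNIV)

lemma card_Compl_letter: "card (- {a :: letter}) = 3"
  by (simp add: Compl_eq_Diff_UNIV card_Diff_singleton card_UNIV_letter)

lemma ex_letter_avoiding: "\<exists>x::letter. x \<noteq> p \<and> x \<noteq> q"
proof -
  have "(False, False) \<notin> {p, q} \<or> (False, True) \<notin> {p, q} \<or> (True, False) \<notin> {p, q}"
    by auto
  then show ?thesis by blast
qed

lemma sum_inv_letter: "(\<Sum>x\<in>UNIV. f (inv_letter x)) = (\<Sum>x\<in>UNIV. f x)"
  by (rule sum.reindex_bij_witness[of _ inv_letter inv_letter]) auto

lemma reduced_Nil [simp]: "reduced []"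
  and reduced_singleton [simp]: "reduced [x]"
  by (simp_all add: reduced_def)

lemma reduced_Cons: "reduced (x # w) \<longleftrightarrow> reduced w \<and> (w = [] \<or> hd w \<noteq> inv_letter x)"
  by (cases w) (auto simp: reduced_def nth_Cons split: nat.splits)

lemma reduced_append:
  "reduced (u @ v) \<longleftrightarrow> reduced u \<and> reduced v \<and> (u = [] \<or> v = [] \<or> hd v \<noteq> inv_letter (last u))"
  by (induction u) (auto simp: reduced_Cons)

lemma reduced_append_iff:
  "v \<noteq> [] \<Longrightarrow> reduced (u @ v) \<longleftrightarrow> reduced (u @ [hd v]) \<and> reduced v"
  by (auto simp: reduced_append)

lemma reduced_replicate: "reduced (replicate n x)"
  by (induction n) (auto simp: reduced_Cons)

lemma mul_Nil [simp]: "mul [] v = v"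
  and mul_Cons [simp]: "mul (x # u) v = mul_letter x (mul u v)"
  and mul_append [simp]: "mul (u @ u') v = mul u (mul u' v)"
  by (simp_all add: mul_def)

lemma mul_letter_Cons: "w = [] \<or> hd w \<noteq> inv_letter x \<Longrightarrow> mul_letter x w = x # w"
  by (cases w) (auto simp: mul_letter_def)

lemma mul_letter_inv_letter_hd: "w \<noteq> [] \<Longrightarrow> mul_letter (inv_letter (hd w)) w = tl w"
  by (cases w) (auto simp: mul_letter_def)

lemma reduced_mul_letter: "reduced w \<Longrightarrow> reduced (mul_letter x w)"
  by (cases w) (auto simp: mul_letter_def reduced_Cons)

lemma reduced_mul: "reduced v \<Longrightarrow> reduced (mul u v)"
  by (induction u) (auto simp: reduced_mul_letter)

lemma mul_letter_inv_cancel: "reduced w \<Longrightarrow> mul_letter (inv_letter x) (mul_letter x w) = w"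
  by (cases w) (auto simp: mul_letter_def reduced_Cons split: list.split)

lemma mul_eq_append: "reduced (u @ v) \<Longrightarrow> mul u v = u @ v"
  by (induction u) (auto simp: reduced_Cons mul_letter_Cons)

lemma mul_Nil_right: "reduced u \<Longrightarrow> mul u [] = u"
  using mul_eq_append[of u "[]"] by simp

lemma even_length_mul: "even (length (mul u v)) \<longleftrightarrow> even (length u + length v)"
  by (induction u) (auto simp: mul_letter_def split: list.split)

lemma mul_letter_mul:
  assumes "reduced r" "reduced w"
  shows "mul (mul_letter x r) w = mul_letter x (mul r w)"
proof (cases "r \<noteq> [] \<and> hd r = inv_letter x")
  case True
  then obtain r' where "r = inv_letter x # r'" by (cases r) auto
  with assms have "mul_letter x (mul r w) = mul r' w"
    using mul_letter_inv_cancel[of "mul r' w" "inv_letter x"]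
    by (simp add: reduced_mul reduced_Cons)
  with \<open>r = inv_letter x # r'\<close> show ?thesis by (simp add: mul_letter_def)
qed (auto simp: mul_letter_def split: list.split)

lemma mul_assoc: "reduced v \<Longrightarrow> reduced w \<Longrightarrow> mul (mul u v) w = mul u (mul v w)"
  by (induction u) (auto simp: mul_letter_mul reduced_mul)

lemma inv_Nil [simp]: "inv [] = []"
  and inv_Cons [simp]: "inv (x # u) = inv u @ [inv_letter x]"
  and length_inv [simp]: "length (inv u) = length u"
  by (simp_all add: inv_def)

lemma inv_inv [simp]: "inv (inv u) = u"
  by (simp add: inv_def rev_map comp_def)

lemma reduced_inv: "reduced u \<Longrightarrow> reduced (inv u)"
proof (induction u)
  case (Cons x u)
  then show ?case
    by (cases u) (auto simp: reduced_append reduced_Cons inv_def last_map last_rev)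
qed simp

lemma mul_inv_cancel_left: "reduced w \<Longrightarrow> mul (inv u) (mul u w) = w"
  by (induction u) (auto simp: mul_letter_inv_cancel reduced_mul)

lemma mul_inv_cancel_left': "reduced w \<Longrightarrow> mul u (mul (inv u) w) = w"
  using mul_inv_cancel_left[of w "inv u"] by simp

lemma mul_inv_self: "reduced w \<Longrightarrow> mul (inv w) w = []"
  using mul_inv_cancel_left[of "[]" w] by (simp add: mul_Nil_right)

lemma inj_on_mul: "inj_on (mul u) F2"
  by (rule inj_on_inverseI[of _ "mul (inv u)"]) (simp add: F2_def mul_inv_cancel_left)

section \<open>The action on left cosets\<close>

definition act :: "letter list \<Rightarrow> letter list set \<Rightarrow> letter list set" where
  "act u c = mul u ` c"

lemma act_Nil [simp]: "act [] c = c"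
  by (simp add: act_def)

lemma act_append: "act (u @ v) c = act u (act v c)"
  by (simp add: act_def image_image)

lemma lcoset_Nil [simp]: "lcoset [] K = K"
  by (simp add: lcoset_def)

locale finite_index_subgroup =
  fixes K :: "letter list set"
  assumes subgroup: "is_subgroup K" and finite_lcosets: "finite (lcosets K)"
begin

abbreviation C :: "letter list set set" where
  "C \<equiv> lcosets K"

lemma reduced_of_mem: "k \<in> K \<Longrightarrow> reduced k"
  and Nil_mem: "[] \<in> K"
  and mul_mem: "k \<in> K \<Longrightarrow> k' \<in> K \<Longrightarrow> mul k k' \<in> K"
  and inv_mem: "k \<in> K \<Longrightarrow> inv k \<in> K"
  using subgroup by (auto simp: is_subgroup_def F2_def)

lemma mem_lcosets_iff: "c \<in> C \<longleftrightarrow> (\<exists>z. reduced z \<and> c = lcoset z K)"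
  by (auto simp: lcosets_def F2_def)

lemma lcoset_mem_lcosets: "reduced w \<Longrightarrow> lcoset w K \<in> C"
  by (auto simp: mem_lcosets_iff)

lemma K_mem_lcosets: "K \<in> C"
  using lcoset_mem_lcosets[of "[]"] by simp

lemma act_lcoset: "reduced z \<Longrightarrow> act u (lcoset z K) = lcoset (mul u z) K"
  unfolding act_def lcoset_def image_image
  by (rule image_cong) (auto simp: mul_assoc reduced_of_mem)

lemma lcoset_of_mem: "k \<in> K \<Longrightarrow> lcoset k K = K"
proof
  assume k: "k \<in> K"
  then show "lcoset k K \<subseteq> K"
    by (auto simp: lcoset_def mul_mem)
  show "K \<subseteq> lcoset k K"
  proof
    fix k' assume "k' \<in> K"
    then have "k' = mul k (mul (inv k) k')" "mul (inv k) k' \<in> K"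
      using k by (simp_all add: mul_inv_cancel_left' reduced_of_mem mul_mem inv_mem)
    then show "k' \<in> lcoset k K"
      unfolding lcoset_def by blast
  qed
qed

lemma mem_lcoset_self: "reduced w \<Longrightarrow> w \<in> lcoset w K"
  using Nil_mem mul_Nil_right unfolding lcoset_def by (metis image_eqI)

lemma mem_lcoset_iff:
  assumes "reduced z" "reduced w"
  shows "w \<in> lcoset z K \<longleftrightarrow> lcoset w K = lcoset z K"
proof
  assume "w \<in> lcoset z K"
  then obtain k where k: "k \<in> K" "w = mul z k"
    by (auto simp: lcoset_def)
  then have "lcoset w K = act z (lcoset k K)"
    using act_lcoset[OF reduced_of_mem] by simp
  also have "\<dots> = act z (lcoset [] K)"
    by (simp add: lcoset_of_mem k)
  also have "\<dots> = lcoset z K"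
    using act_lcoset[of "[]" z] assms(1) by (simp add: mul_Nil_right)
  finally show "lcoset w K = lcoset z K" .
qed (use assms(2) mem_lcoset_self in metis)

lemma mem_iff_lcoset_eq: "c \<in> C \<Longrightarrow> reduced w \<Longrightarrow> w \<in> c \<longleftrightarrow> lcoset w K = c"
  using mem_lcoset_iff mem_lcosets_iff by metis

lemma act_mem_lcosets: "c \<in> C \<Longrightarrow> act u c \<in> C"
  using mem_lcosets_iff act_lcoset reduced_mul by metis

lemma act_inv_cancel: "c \<in> C \<Longrightarrow> act (inv u) (act u c) = c"
  using mem_lcosets_iff act_lcoset reduced_mul mul_inv_cancel_left by metis

lemma act_inv_cancel': "c \<in> C \<Longrightarrow> act u (act (inv u) c) = c"
  using act_inv_cancel[of c "inv u"] by simp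

lemma act_transitive: "c \<in> C \<Longrightarrow> c' \<in> C \<Longrightarrow> \<exists>u. act u c = c'"
proof -
  assume "c \<in> C" "c' \<in> C"
  then obtain z z' where z: "reduced z" "c = lcoset z K" "reduced z'" "c' = lcoset z' K"
    using mem_lcosets_iff by metis
  then have "act (mul z' (inv z)) c = c'"
    using act_lcoset mul_assoc[OF reduced_inv] by (simp add: mul_inv_self mul_Nil_right)
  then show ?thesis by blast
qed

lemma mul_mem_iff_mem_act:
  assumes "c \<in> C" "reduced w"
  shows "mul u w \<in> c \<longleftrightarrow> w \<in> act (inv u) c"
proof -
  have "mul u w \<in> c \<longleftrightarrow> act u (lcoset w K) = c"
    using mem_iff_lcoset_eq[OF assms(1) reduced_mul[OF assms(2)]] act_lcoset[OF assms(2)] by simp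
  also have "\<dots> \<longleftrightarrow> lcoset w K = act (inv u) c"
    using act_inv_cancel[OF lcoset_mem_lcosets[OF assms(2)]] act_inv_cancel'[OF assms(1)] by metis
  also have "\<dots> \<longleftrightarrow> w \<in> act (inv u) c"
    using mem_iff_lcoset_eq[OF act_mem_lcosets[OF assms(1)] assms(2)] by auto
  finally show ?thesis .
qed

definition acts_trivially :: "letter list \<Rightarrow> bool" where
  "acts_trivially u \<longleftrightarrow> (\<forall>c\<in>C. act u c = c)"

lemma acts_trivially_append: "acts_trivially u \<Longrightarrow> acts_trivially v \<Longrightarrow> acts_trivially (u @ v)"
  by (simp add: acts_trivially_def act_append act_mem_lcosets)

lemma acts_trivially_conj:
  assumes "acts_trivially u"
  shows "acts_trivially ([y] @ u @ [inv_letter y])"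
  unfolding acts_trivially_def
proof
  fix c assume "c \<in> C"
  then have "act u (act [inv_letter y] c) = act [inv_letter y] c"
    using assms act_mem_lcosets by (simp add: acts_trivially_def)
  then show "act ([y] @ u @ [inv_letter y]) c = c"
    using act_inv_cancel'[OF \<open>c \<in> C\<close>, of "[y]"] by (simp only: act_append) simp
qed

lemma ex_power_acts_trivially: "\<exists>k\<ge>1. acts_trivially (replicate k x)"
proof -
  define F where "F i = restrict (act (replicate i x)) C" for i
  have "range F \<subseteq> C \<rightarrow>\<^sub>E C"
    using act_mem_lcosets by (auto simp: F_def)
  moreover have "finite (C \<rightarrow>\<^sub>E C)"
    using finite_lcosets by (simp add: finite_PiE)
  ultimately have "\<not> inj F"
    using finite_imageD finite_subset infinite_UNIV_nat by blast
  then obtain i0 j0 where "F i0 = F j0" "i0 \<noteq> j0"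
    unfolding inj_def by blast
  then obtain i j where ij: "i < j" "F i = F j"
    by (metis linorder_neqE_nat)
  have "act (replicate (j - i) x) c = c" if "c \<in> C" for c
  proof -
    define c0 where "c0 = act (inv (replicate i x)) c"
    have c0: "c0 \<in> C" "act (replicate i x) c0 = c"
      using that by (simp_all add: c0_def act_mem_lcosets act_inv_cancel')
    have "c = act (replicate j x) c0"
      using fun_cong[OF ij(2), of c0] c0 by (simp add: F_def)
    also have "replicate j x = replicate (j - i) x @ replicate i x"
      using ij(1) by (simp flip: replicate_add)
    finally show ?thesis
      using c0(2) by (simp add: act_append)
  qed
  then show ?thesis
    using ij(1) by (intro exI[of _ "j - i"]) (simp add: acts_trivially_def)
qed

definition trivial_loop :: "letter \<Rightarrow> letter list \<Rightarrow> bool" where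
  "trivial_loop x T \<longleftrightarrow> reduced T \<and> T \<noteq> [] \<and> hd T = x \<and> last T = x \<and> acts_trivially T"

lemma trivial_loop_append: "trivial_loop x S \<Longrightarrow> trivial_loop x T \<Longrightarrow> trivial_loop x (S @ T)"
  by (simp add: trivial_loop_def reduced_append acts_trivially_append)

lemma trivial_loop_concat_replicate:
  "trivial_loop x S \<Longrightarrow> trivial_loop x T \<Longrightarrow> trivial_loop x (concat (replicate k S) @ T)"
  by (induction k) (simp_all add: trivial_loop_append)

text \<open>Trivial loops at x can be concatenated, so their half-lengths form an additive semigroup;
  two coprime half-lengths q and 3q + 1 make it contain every large number.\<close>

lemma ex_coprime_trivial_loops:
  obtains q X V where "q \<ge> 1" "trivial_loop x X" "length X = 2 * q"
    "trivial_loop x V" "length V = 2 * (3 * q + 1)"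
proof -
  obtain q where q: "q \<ge> 1" "acts_trivially (replicate q x)"
    using ex_power_acts_trivially by blast
  obtain y where y: "y \<noteq> x" "y \<noteq> inv_letter x"
    using ex_letter_avoiding by blast
  define X where "X = replicate (2 * q) x"
  define V where "V = X @ ([y] @ X @ [inv_letter y]) @ X"
  have "X = replicate q x @ replicate q x"
    by (simp add: X_def flip: replicate_add mult_2)
  then have "acts_trivially X"
    using q(2) acts_trivially_append by simp
  then have "acts_trivially V"
    unfolding V_def by (intro acts_trivially_append acts_trivially_conj)
  moreover have "reduced X" "X \<noteq> []" "hd X = x" "last X = x"
    using q(1) by (simp_all add: X_def reduced_replicate)
  ultimately show thesis
    using that[of q X V] \<open>acts_trivially X\<close> q(1) y
    by (auto simp: trivial_loop_def V_def reduced_append reduced_Cons eq_inv_letter_commute[of y]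
      X_def)
qed

lemma ex_trivial_loop_length: "\<exists>N0. \<forall>N\<ge>N0. \<exists>T. trivial_loop x T \<and> length T = 2 * N"
proof -
  obtain q X V where q: "q \<ge> 1" and X: "trivial_loop x X" "length X = 2 * q"
    and V: "trivial_loop x V" "length V = 2 * (3 * q + 1)"
    using ex_coprime_trivial_loops .
  have "\<exists>T. trivial_loop x T \<and> length T = 2 * N" if N: "q * (3 * q + 1) \<le> N" for N
  proof -
    obtain a b where ab: "N = q * (a + 1) + (3 * q + 1) * b"
      using nat_eq_linear_combination[OF q N] by blast
    define T where "T = concat (replicate b V) @ concat (replicate a X) @ X"
    have "trivial_loop x T"
      unfolding T_def using trivial_loop_concat_replicate X V by blast
    moreover have "length T = 2 * N"
      using ab X V by (simp add: T_def length_concat sum_list_replicate algebra_simps)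
    ultimately show ?thesis by blast
  qed
  then show ?thesis by blast
qed

lemma ex_trivial_filler:
  assumes "reduced d"
  shows "\<exists>N0. \<forall>N\<ge>N0. \<exists>T. acts_trivially T \<and> length T = 2 * N \<and> reduced (d @ T @ [l])"
proof -
  obtain x where x: "x \<noteq> inv_letter l" "x \<noteq> (if d = [] then inv_letter l else inv_letter (last d))"
    using ex_letter_avoiding by blast
  obtain N0 where N0: "\<forall>N\<ge>N0. \<exists>T. trivial_loop x T \<and> length T = 2 * N"
    using ex_trivial_loop_length by blast
  have "reduced (d @ T @ [l])" if "trivial_loop x T" for T
    using that x assms eq_inv_letter_commute[of l x]
    by (auto simp: trivial_loop_def reduced_append split: if_splits)
  then show ?thesis
    using N0 trivial_loop_def by blast
qed

end

section \<open>Spheres\<close>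

definition prefixes :: "nat \<Rightarrow> letter \<Rightarrow> letter list set" where
  "prefixes L l = {u. length u = L \<and> reduced (u @ [l])}"

lemma prefixes_Suc:
  "prefixes (Suc L) l = (\<lambda>(u, x). x # u) ` (SIGMA u:prefixes L l. - {inv_letter (hd (u @ [l]))})"
  by (auto simp: prefixes_def length_Suc_conv reduced_Cons eq_inv_letter_commute image_iff)

lemma finite_words_length_eq: "finite {w :: letter list. length w = n}"
  using finite_lists_length_eq[of "UNIV :: letter set" n] by simp

lemma finite_prefixes: "finite (prefixes L l)"
  by (rule finite_subset[OF _ finite_words_length_eq[of L]]) (auto simp: prefixes_def)

lemma card_prefixes: "card (prefixes L l) = 3 ^ L"
proof (induction L)
  case 0
  have "prefixes 0 l = {[]}"
    by (auto simp: prefixes_def)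
  then show ?case by simp
next
  case (Suc L)
  have "inj_on (\<lambda>(u, x). x # u) (SIGMA u:prefixes L l. - {inv_letter (hd (u @ [l]))})"
    by (auto simp: inj_on_def)
  then have "card (prefixes (Suc L) l) = (\<Sum>u\<in>prefixes L l. card (- {inv_letter (hd (u @ [l]))}))"
    by (simp add: prefixes_Suc card_image finite_prefixes)
  also have "\<dots> = 3 * 3 ^ L"
    by (simp add: card_Compl_letter Suc.IH)
  finally show ?case by simp
qed

lemma finite_sphere: "finite (sphere n)"
  by (rule finite_subset[OF _ finite_words_length_eq[of n]]) (auto simp: sphere_def)

lemma card_sphere_pos: "card (sphere n) > 0"
proof -
  have "replicate n x \<in> sphere n"
    by (simp add: sphere_def F2_def reduced_replicate)
  then show ?thesis
    using finite_sphere card_gt_0_iff by blast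
qed

lemma sphere_add:
  assumes "n \<ge> 1"
  shows "sphere (L + n) = (\<lambda>(v, u). u @ v) ` (SIGMA v:sphere n. prefixes L (hd v))"
proof (intro equalityI subsetI)
  fix w assume "w \<in> sphere (L + n)"
  then have w: "reduced (take L w @ drop L w)" "length w = L + n"
    by (simp_all add: sphere_def F2_def)
  then have "drop L w \<noteq> []"
    using assms by auto
  then have "reduced (take L w @ [hd (drop L w)])" "reduced (drop L w)"
    using reduced_append_iff[OF \<open>drop L w \<noteq> []\<close>, of "take L w"] w(1) by simp_all
  then have "(drop L w, take L w) \<in> (SIGMA v:sphere n. prefixes L (hd v))"
    using w(2) by (simp add: sphere_def F2_def prefixes_def)
  then show "w \<in> (\<lambda>(v, u). u @ v) ` (SIGMA v:sphere n. prefixes L (hd v))"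
    by (rule rev_image_eqI) simp_all
next
  fix w assume "w \<in> (\<lambda>(v, u). u @ v) ` (SIGMA v:sphere n. prefixes L (hd v))"
  then obtain u v where uv: "w = u @ v" "v \<in> sphere n" "u \<in> prefixes L (hd v)"
    by auto
  then have "v \<noteq> []"
    using assms by (auto simp: sphere_def)
  then have "reduced (u @ v)"
    using uv reduced_append_iff[OF \<open>v \<noteq> []\<close>, of u] by (simp add: sphere_def F2_def prefixes_def)
  then show "w \<in> sphere (L + n)"
    using uv by (simp add: sphere_def F2_def prefixes_def)
qed

lemma sum_sphere_add:
  assumes "n \<ge> 1"
  shows "(\<Sum>w\<in>sphere (L + n). g w) = (\<Sum>v\<in>sphere n. \<Sum>u\<in>prefixes L (hd v). g (u @ v))"
proof -
  have "inj_on (\<lambda>(v, u). u @ v) (SIGMA v:sphere n. prefixes L (hd v))"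
    by (auto simp: inj_on_def prefixes_def)
  then show ?thesis
    by (simp add: sphere_add[OF assms] sum.reindex sum.Sigma finite_sphere finite_prefixes split_def)
qed

lemma card_sphere_add: "n \<ge> 1 \<Longrightarrow> card (sphere (L + n)) = 3 ^ L * card (sphere n)"
  using sum_sphere_add[where g = "\<lambda>_. 1::nat"] by (simp add: card_prefixes)

lemma sum_sphere_Suc:
  assumes "n \<ge> 1"
  shows "(\<Sum>w\<in>sphere (Suc n). g w) = (\<Sum>v\<in>sphere n. \<Sum>x\<in>- {inv_letter (hd v)}. g (x # v))"
proof -
  have "prefixes 1 l = (\<lambda>x. [x]) ` (- {inv_letter l})" for l
    by (auto simp: prefixes_def length_Suc_conv reduced_Cons eq_inv_letter_commute)
  then show ?thesis
    using sum_sphere_add[OF assms, where L = 1 and g = g] by (simp add: sum.reindex inj_on_def)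
qed

lemma sum_sphere_Suc_tl:
  fixes g :: "letter list \<Rightarrow> 'a::comm_semiring_1"
  assumes "n \<ge> 1"
  shows "(\<Sum>w\<in>sphere (Suc n). g (tl w)) = 3 * (\<Sum>v\<in>sphere n. g v)"
proof -
  have "(\<Sum>x\<in>- {inv_letter (hd v)}. g v) = 3 * g v" for v
    by (simp add: card_Compl_letter)
  then show ?thesis
    by (simp add: sum_sphere_Suc[OF assms] sum_distrib_left)
qed

lemma sum_mul_letter:
  assumes "w \<noteq> []"
  shows "(\<Sum>x\<in>UNIV. g (mul_letter x w)) = g (tl w) + (\<Sum>x\<in>- {inv_letter (hd w)}. g (x # w))"
proof -
  have "(\<Sum>x\<in>UNIV. g (mul_letter x w))
      = g (mul_letter (inv_letter (hd w)) w) + (\<Sum>x\<in>- {inv_letter (hd w)}. g (mul_letter x w))"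
    by (simp add: sum.remove[of UNIV "inv_letter (hd w)"] Compl_eq_Diff_UNIV)
  also have "\<dots> = g (tl w) + (\<Sum>x\<in>- {inv_letter (hd w)}. g (x # w))"
    using assms by (simp add: mul_letter_inv_letter_hd mul_letter_Cons eq_inv_letter_commute)
  finally show ?thesis .
qed

definition share :: "nat \<Rightarrow> letter list set \<Rightarrow> real" where
  "share n A = card (A \<inter> sphere n) / card (sphere n)"

section \<open>The walk on cosets\<close>

context finite_index_subgroup
begin

definition state :: "letter list \<Rightarrow> letter list set \<times> letter" where
  "state w = (lcoset w K, hd w)"

definition coupled :: "nat \<Rightarrow> letter list set \<times> letter \<Rightarrow> letter list set \<times> letter \<Rightarrow> bool" where
  "coupled L s s' \<longleftrightarrow> (\<exists>u\<in>prefixes L (snd s). \<exists>u'\<in>prefixes L (snd s').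
     act u (fst s) = act u' (fst s') \<and> hd u = hd u')"

text \<open>d = w w'^-1 has even length and carries the coset of w' to that of w; trivially acting
  fillers T, T' of suitable lengths make e T and e d T' prefixes of the same length.\<close>

lemma ex_coupled:
  assumes w: "reduced w" "w \<noteq> []" and w': "reduced w'" "w' \<noteq> []"
    and parity: "even (length w) = even (length w')"
  shows "\<exists>L. coupled L (state w) (state w')"
proof -
  define d where "d = mul w (inv w')"
  have d: "reduced d" "even (length d)"
    using parity by (simp_all add: d_def reduced_mul reduced_inv w' even_length_mul)
  have "mul d w' = w"
    using w w' by (simp add: d_def mul_assoc reduced_inv mul_inv_self mul_Nil_right)
  then have act_d: "act d (lcoset w' K) = lcoset w K"
    using act_lcoset[OF w'(1)] by simp
  obtain N1 where N1: "\<forall>N\<ge>N1. \<exists>T. acts_trivially T \<and> length T = 2 * N \<and> reduced (T @ [hd w])"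
    using ex_trivial_filler[OF reduced_Nil, of "hd w"] by auto
  obtain N2 where N2: "\<forall>N\<ge>N2. \<exists>T. acts_trivially T \<and> length T = 2 * N \<and> reduced (d @ T @ [hd w'])"
    using ex_trivial_filler[OF d(1)] by blast
  obtain T where T: "acts_trivially T" "length T = 2 * (length d div 2 + N1 + N2)"
    "reduced (T @ [hd w])"
    using N1[rule_format, of "length d div 2 + N1 + N2"] by auto
  obtain T' where T': "acts_trivially T'" "length T' = 2 * (N1 + N2)" "reduced (d @ T' @ [hd w'])"
    using N2[rule_format, of "N1 + N2"] by auto
  obtain e where e: "e \<noteq> inv_letter (hd (T @ [hd w]))" "e \<noteq> inv_letter (hd (d @ T' @ [hd w']))"
    using ex_letter_avoiding by blast
  have "e # T \<in> prefixes (length (e # T)) (hd w)"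
    using T(3) e(1) eq_inv_letter_commute by (simp add: prefixes_def reduced_Cons)
  moreover have "e # d @ T' \<in> prefixes (length (e # T)) (hd w')"
    using T(2) T'(2,3) d(2) e(2) eq_inv_letter_commute
    by (auto simp: prefixes_def reduced_Cons)
  moreover have "act ([e] @ T) (lcoset w K) = act ([e] @ d @ T') (lcoset w' K)"
    unfolding act_append using T(1) T'(1) act_d lcoset_mem_lcosets w w'
    by (simp add: acts_trivially_def)
  ultimately show ?thesis
    unfolding coupled_def state_def by force
qed

lemma coupled_Suc: "coupled L s s' \<Longrightarrow> coupled (Suc L) s s'"
proof -
  assume "coupled L s s'"
  then obtain u u' where u: "u \<in> prefixes L (snd s)" "u' \<in> prefixes L (snd s')"
    "act u (fst s) = act u' (fst s')" "hd u = hd u'"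
    unfolding coupled_def by blast
  obtain y where "y \<noteq> inv_letter (hd (u @ [snd s]))" "y \<noteq> inv_letter (hd (u' @ [snd s']))"
    using ex_letter_avoiding by blast
  then have "y # u \<in> prefixes (Suc L) (snd s)" "y # u' \<in> prefixes (Suc L) (snd s')"
    using u(1,2) by (auto simp: prefixes_def reduced_Cons eq_inv_letter_commute[of y])
  moreover have "act ([y] @ u) (fst s) = act ([y] @ u') (fst s')"
    unfolding act_append u(3) ..
  ultimately show ?thesis
    unfolding coupled_def by force
qed

lemma coupled_mono:
  assumes "L \<le> L'" "coupled L s s'"
  shows "coupled L' s s'"
  using assms by (induction rule: dec_induct) (simp_all add: coupled_Suc)

definition states :: "bool \<Rightarrow> (letter list set \<times> letter) set" where
  "states p = state ` {w. reduced w \<and> w \<noteq> [] \<and> even (length w) = p}"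

lemma finite_states: "finite (states p)"
  by (rule finite_subset[OF _ finite_cartesian_product[OF finite_lcosets finite_UNIV]])
    (auto simp: states_def state_def lcoset_mem_lcosets)

lemma ex_coupling_time: "\<exists>L\<ge>1. even L \<and> (\<forall>s\<in>states p. \<forall>s'\<in>states p. coupled L s s')"
proof -
  have "\<forall>q\<in>states p \<times> states p. \<exists>L. coupled L (fst q) (snd q)"
    using ex_coupled by (force simp: states_def)
  then obtain Lq where Lq: "\<And>q. q \<in> states p \<times> states p \<Longrightarrow> coupled (Lq q) (fst q) (snd q)"
    by metis
  define L where "L = 2 * (1 + sum Lq (states p \<times> states p))"
  have "coupled L s s'" if "s \<in> states p" "s' \<in> states p" for s s'
  proof (rule coupled_mono)
    show "coupled (Lq (s, s')) s s'"
      using Lq[of "(s, s')"] that by simp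
    have "Lq (s, s') \<le> sum Lq (states p \<times> states p)"
      by (rule member_le_sum) (simp_all add: that finite_states)
    then show "Lq (s, s') \<le> L"
      by (simp add: L_def)
  qed
  then show ?thesis
    by (intro exI[of _ L]) (simp add: L_def)
qed

definition avg :: "nat \<Rightarrow> (letter list set \<times> letter \<Rightarrow> real) \<Rightarrow> real" where
  "avg n f = (\<Sum>w\<in>sphere n. f (state w)) / card (sphere n)"

definition step :: "nat \<Rightarrow> (letter list set \<times> letter \<Rightarrow> real) \<Rightarrow> letter list set \<times> letter \<Rightarrow> real"
  where "step L f s = (\<Sum>u\<in>prefixes L (snd s). f (act u (fst s), hd u)) / 3 ^ L"

lemma state_append:
  assumes "u \<in> prefixes L (hd v)" "reduced v" "v \<noteq> []" "L \<ge> 1"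
  shows "state (u @ v) = (act u (fst (state v)), hd u)"
proof -
  have "reduced (u @ v)" "u \<noteq> []"
    using assms reduced_append_iff[of v u] by (auto simp: prefixes_def)
  then show ?thesis
    using mul_eq_append act_lcoset[OF assms(2), of u] by (simp add: state_def)
qed

lemma avg_add:
  assumes "n \<ge> 1" "L \<ge> 1"
  shows "avg (L + n) f = avg n (step L f)"
proof -
  have "(\<Sum>w\<in>sphere (L + n). f (state w)) = (\<Sum>v\<in>sphere n. \<Sum>u\<in>prefixes L (hd v). f (state (u @ v)))"
    using sum_sphere_add[OF assms(1)] .
  also have "\<dots> = (\<Sum>v\<in>sphere n. 3 ^ L * step L f (state v))"
  proof (intro sum.cong refl)
    fix v assume "v \<in> sphere n"
    then have "reduced v" "v \<noteq> []"
      using assms(1) by (auto simp: sphere_def F2_def)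
    then show "(\<Sum>u\<in>prefixes L (hd v). f (state (u @ v))) = 3 ^ L * step L f (state v)"
      using assms(2) by (simp add: step_def state_append cong: sum.cong) (simp add: state_def)
  qed
  finally show ?thesis
    by (simp add: avg_def card_sphere_add[OF assms(1)] sum_distrib_left[symmetric])
qed

lemma avg_funpow:
  assumes "n \<ge> 1" "L \<ge> 1"
  shows "avg (j * L + n) f = avg n ((step L ^^ j) f)"
proof (induction j arbitrary: f)
  case (Suc j)
  have "Suc j * L + n = L + (j * L + n)"
    by simp
  then have "avg (Suc j * L + n) f = avg (j * L + n) (step L f)"
    using avg_add[of "j * L + n" L f] assms by (simp add: add.assoc)
  then show ?case
    by (simp add: Suc.IH funpow_Suc_right del: funpow.simps)
qed simp

definition oscillation_le :: "bool \<Rightarrow> (letter list set \<times> letter \<Rightarrow> real) \<Rightarrow> real \<Rightarrow> bool" where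
  "oscillation_le p f r \<longleftrightarrow> (\<forall>s\<in>states p. \<forall>s'\<in>states p. \<bar>f s - f s'\<bar> \<le> r)"

lemma state_mem_states: "n \<ge> 1 \<Longrightarrow> w \<in> sphere n \<Longrightarrow> state w \<in> states (even n)"
  by (auto simp: states_def sphere_def F2_def)

lemma abs_avg_diff_le:
  assumes "n \<ge> 1" "n' \<ge> 1" "even n = even n'" and "oscillation_le (even n) f r"
  shows "\<bar>avg n f - avg n' f\<bar> \<le> r"
proof -
  have "\<forall>a\<in>sphere n. \<forall>b\<in>sphere n'. \<bar>f (state a) - f (state b)\<bar> \<le> r"
  proof (intro ballI)
    fix a b assume "a \<in> sphere n" "b \<in> sphere n'"
    then have "state a \<in> states (even n)" "state b \<in> states (even n)"
      using state_mem_states[OF assms(1)] state_mem_states[OF assms(2)] assms(3) by simp_all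
    then show "\<bar>f (state a) - f (state b)\<bar> \<le> r"
      using assms(4) by (simp add: oscillation_le_def)
  qed
  then show ?thesis
    unfolding avg_def using finite_sphere card_sphere_pos
    by (intro abs_mean_diff_le) (auto simp: card_gt_0_iff)
qed

lemma step_mem_states:
  assumes "s \<in> states p" "u \<in> prefixes L (snd s)" "L \<ge> 1" "even L"
  shows "(act u (fst s), hd u) \<in> states p"
proof -
  obtain w where w: "s = state w" "reduced w" "w \<noteq> []" "even (length w) = p"
    using assms(1) by (auto simp: states_def)
  then have "u \<in> prefixes L (hd w)"
    using assms(2) by (simp add: state_def)
  then have "state (u @ w) = (act u (fst s), hd u)" "reduced (u @ w)" "length u = L"
    using state_append w assms(3) reduced_append_iff[of w u] by (auto simp: prefixes_def)
  then show ?thesis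
    using w assms(4) unfolding states_def by (intro image_eqI[of _ _ "u @ w"]) auto
qed

text \<open>Doeblin's argument: the two averages defining step L f at coupled states share one
  of their 3^L terms, and the remaining terms are compared pairwise.\<close>

lemma abs_step_diff_le:
  assumes u0: "u0 \<in> prefixes L (snd s)" "u0' \<in> prefixes L (snd s')"
    "act u0 (fst s) = act u0' (fst s')" "hd u0 = hd u0'" and "L \<ge> 1"
    and bound: "\<forall>u\<in>prefixes L (snd s) - {u0}. \<forall>u'\<in>prefixes L (snd s') - {u0'}.
      \<bar>f (act u (fst s), hd u) - f (act u' (fst s'), hd u')\<bar> \<le> r"
  shows "\<bar>step L f s - step L f s'\<bar> \<le> (1 - 1 / 3 ^ L) * r"
proof -
  define N :: real where "N = 3 ^ L"
  define A where "A = prefixes L (snd s) - {u0}"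
  define B where "B = prefixes L (snd s') - {u0'}"
  define F where "F u = f (act u (fst s), hd u)" for u
  define G where "G u = f (act u (fst s'), hd u)" for u
  have "N \<ge> 3"
    using power_increasing[OF \<open>L \<ge> 1\<close>, of "3::real"] by (simp add: N_def)
  have card: "card A = N - 1" "card B = N - 1"
    using u0(1,2) by (simp_all add: A_def B_def N_def finite_prefixes card_prefixes)
  with \<open>N \<ge> 3\<close> have "real (card A) > 0" "real (card B) > 0"
    by simp_all
  then have "A \<noteq> {}" "B \<noteq> {}"
    by auto
  then have mean: "\<bar>(sum F A - sum G B) / (N - 1)\<bar> \<le> r"
    using abs_mean_diff_le[of A B F G r] bound card
    by (simp add: A_def B_def F_def G_def finite_prefixes diff_divide_distrib)
  have "step L f s = (F u0 + sum F A) / N" "step L f s' = (F u0 + sum G B) / N"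
    using u0 sum.remove[OF finite_prefixes u0(1), of F] sum.remove[OF finite_prefixes u0(2), of G]
    by (simp_all add: step_def A_def B_def F_def G_def N_def)
  then have "step L f s - step L f s' = (N - 1) / N * ((sum F A - sum G B) / (N - 1))"
    using \<open>N \<ge> 3\<close> by (simp add: diff_divide_distrib[symmetric])
  also have "\<bar>\<dots>\<bar> = (N - 1) / N * \<bar>(sum F A - sum G B) / (N - 1)\<bar>"
    using \<open>N \<ge> 3\<close> by (simp add: abs_mult)
  also have "\<dots> \<le> (N - 1) / N * r"
    using mean \<open>N \<ge> 3\<close> by (intro mult_left_mono) auto
  also have "\<dots> = (1 - 1 / 3 ^ L) * r"
    using \<open>N \<ge> 3\<close> by (simp add: N_def field_simps)
  finally show ?thesis .
qed

lemma oscillation_le_step: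
  assumes L: "L \<ge> 1" "even L" and coupled: "\<forall>s\<in>states p. \<forall>s'\<in>states p. coupled L s s'"
    and osc: "oscillation_le p f r"
  shows "oscillation_le p (step L f) ((1 - 1 / 3 ^ L) * r)"
  unfolding oscillation_le_def
proof (intro ballI)
  fix s s' assume s: "s \<in> states p" "s' \<in> states p"
  then obtain u0 u0' where u0: "u0 \<in> prefixes L (snd s)" "u0' \<in> prefixes L (snd s')"
    "act u0 (fst s) = act u0' (fst s')" "hd u0 = hd u0'"
    using coupled unfolding coupled_def by blast
  show "\<bar>step L f s - step L f s'\<bar> \<le> (1 - 1 / 3 ^ L) * r"
    using osc step_mem_states[OF s(1) _ L] step_mem_states[OF s(2) _ L]
    by (intro abs_step_diff_le[OF u0 L(1)]) (simp add: oscillation_le_def)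
qed

lemma oscillation_le_funpow_step:
  assumes "L \<ge> 1" "even L" "\<forall>s\<in>states p. \<forall>s'\<in>states p. coupled L s s'"
    and "oscillation_le p f r"
  shows "oscillation_le p ((step L ^^ j) f) ((1 - 1 / 3 ^ L) ^ j * r)"
proof (induction j)
  case (Suc j)
  then show ?case
    using oscillation_le_step[OF assms(1-3) Suc.IH] by (simp add: mult.assoc)
qed (simp add: assms(4))

lemma avg_convergent:
  assumes f: "\<And>s. 0 \<le> f s \<and> f s \<le> 1" and "r \<ge> 1"
  shows "convergent (\<lambda>i. avg (2 * i + r) f)"
proof (rule Cauchy_convergent, rule CauchyI)
  fix e :: real assume "e > 0"
  obtain L where L: "L \<ge> 1" "even L" "\<forall>s\<in>states (even r). \<forall>s'\<in>states (even r). coupled L s s'"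
    using ex_coupling_time by blast
  define \<theta> :: real where "\<theta> = 1 - 1 / 3 ^ L"
  obtain j where "\<theta> ^ j < e"
    using real_arch_pow_inv[OF \<open>e > 0\<close>, of \<theta>] by (auto simp: \<theta>_def)
  have "\<bar>f s - f s'\<bar> \<le> 1" for s s'
    using f[of s] f[of s'] unfolding abs_le_iff by linarith
  then have "oscillation_le (even r) f 1"
    by (simp add: oscillation_le_def)
  then have osc: "oscillation_le (even r) ((step L ^^ j) f) (\<theta> ^ j)"
    using oscillation_le_funpow_step[OF L, of f 1 j] by (simp add: \<theta>_def)
  have "\<bar>avg (2 * m + r) f - avg (2 * n + r) f\<bar> < e" if "m \<ge> j * L" "n \<ge> j * L" for m n
  proof -
    define a where "a = 2 * m + r - j * L"
    define b where "b = 2 * n + r - j * L"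
    have ab: "2 * m + r = j * L + a" "2 * n + r = j * L + b" "a \<ge> 1" "b \<ge> 1"
      "even a = even r" "even b = even r"
      using that \<open>r \<ge> 1\<close> L(2) by (auto simp: a_def b_def)
    then have "\<bar>avg a ((step L ^^ j) f) - avg b ((step L ^^ j) f)\<bar> \<le> \<theta> ^ j"
      using osc by (intro abs_avg_diff_le) simp_all
    then show ?thesis
      using \<open>\<theta> ^ j < e\<close> L(1) ab by (simp add: avg_funpow)
  qed
  then show "\<exists>M. \<forall>m\<ge>M. \<forall>n\<ge>M. norm (avg (2 * m + r) f - avg (2 * n + r) f) < e"
    by auto
qed

section \<open>Shares of cosets\<close>

lemma lcosets_subset_F2: "c \<in> C \<Longrightarrow> c \<subseteq> F2"
  by (auto simp: mem_lcosets_iff lcoset_def F2_def reduced_mul reduced_of_mem)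

lemma sum_card_act_Int_sphere:
  assumes "n \<ge> 1" "c \<in> C"
  shows "(\<Sum>x\<in>UNIV. card (act [x] c \<inter> sphere (Suc n)))
    = card (c \<inter> sphere (Suc (Suc n))) + 3 * card (c \<inter> sphere n)"
proof -
  have card_eq: "card (A \<inter> sphere m) = (\<Sum>w\<in>sphere m. indicator A w)" for A m
    by (simp add: sum_indicator_eq_card finite_sphere Int_commute)
  have "card (act [x] c \<inter> sphere (Suc n))
      = (\<Sum>w\<in>sphere (Suc n). indicator c (mul_letter (inv_letter x) w))" for x
    unfolding card_eq using mul_mem_iff_mem_act[OF assms(2), of _ "[inv_letter x]"]
    by (intro sum.cong refl) (simp add: indicator_def sphere_def F2_def)
  then have "(\<Sum>x\<in>UNIV. card (act [x] c \<inter> sphere (Suc n)))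
      = (\<Sum>x\<in>UNIV. \<Sum>w\<in>sphere (Suc n). indicator c (mul_letter (inv_letter x) w))"
    by simp
  also have "\<dots> = (\<Sum>x\<in>UNIV. \<Sum>w\<in>sphere (Suc n). indicator c (mul_letter x w))"
    by (rule sum_inv_letter)
  also have "\<dots> = (\<Sum>w\<in>sphere (Suc n). \<Sum>x\<in>UNIV. indicator c (mul_letter x w))"
    by (rule sum.swap)
  also have "\<dots> = (\<Sum>w\<in>sphere (Suc n). indicator c (tl w)
      + (\<Sum>x\<in>- {inv_letter (hd w)}. indicator c (x # w)))"
    by (intro sum.cong refl sum_mul_letter) (auto simp: sphere_def)
  also have "\<dots> = 3 * card (c \<inter> sphere n) + card (c \<inter> sphere (Suc (Suc n)))"
    using sum_sphere_Suc_tl[OF assms(1), of "indicator c :: _ \<Rightarrow> nat"]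
      sum_sphere_Suc[of "Suc n" "indicator c :: _ \<Rightarrow> nat"]
    by (simp add: sum.distrib card_eq)
  finally show ?thesis by simp
qed

lemma share_rec:
  assumes "n \<ge> 1" "c \<in> C"
  shows "(\<Sum>x\<in>UNIV. share (Suc n) (act [x] c)) = 3 * share (Suc (Suc n)) c + share n c"
proof -
  define a where "a = real (card (sphere n))"
  have "a > 0"
    using card_sphere_pos by (simp add: a_def)
  moreover have "card (sphere (Suc n)) = 3 * a" "card (sphere (Suc (Suc n))) = 9 * a"
    using card_sphere_add[OF assms(1), of 1] card_sphere_add[OF assms(1), of 2]
    by (simp_all add: a_def)
  ultimately show ?thesis
    using sum_card_act_Int_sphere[OF assms]
    by (simp add: share_def a_def[symmetric] sum_divide_distrib[symmetric] field_simps
      flip: of_nat_sum)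
qed

lemma share_eq_avg:
  assumes "c \<in> C"
  shows "share n c = avg n (\<lambda>s. if fst s = c then 1 else 0)"
proof -
  have "(\<Sum>w\<in>sphere n. if fst (state w) = c then 1 else 0) = (\<Sum>w\<in>sphere n. if w \<in> c then 1 else 0 :: real)"
    using mem_iff_lcoset_eq[OF assms] by (intro sum.cong refl) (auto simp: state_def sphere_def F2_def)
  also have "\<dots> = card (c \<inter> sphere n)"
    by (simp add: sum.If_cases finite_sphere Int_commute)
  finally show ?thesis
    by (simp add: share_def avg_def)
qed

definition share_limit :: "nat \<Rightarrow> letter list set \<Rightarrow> real" where
  "share_limit r c = lim (\<lambda>i. share (2 * i + r) c)"

lemma share_tendsto:
  assumes "c \<in> C"
  shows "(\<lambda>i. share (2 * i + r) c) \<longlonglongrightarrow> share_limit (r mod 2) c"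
proof (rule LIMSEQ_parity)
  have conv: "convergent (\<lambda>i. share (2 * i + r) c)" if "r \<ge> 1" for r
    using avg_convergent[OF _ that] by (simp add: share_eq_avg[OF assms])
  have "(\<lambda>i. share (2 * Suc i) c) = (\<lambda>i. share (2 * i + 2) c)"
    by simp
  then have "convergent (\<lambda>i. share (2 * i) c)"
    using conv[of 2] convergent_Suc_iff[of "\<lambda>i. share (2 * i) c"] by simp
  moreover have "convergent (\<lambda>i. share (2 * i + 1) c)"
    using conv[of 1] by simp
  ultimately have "convergent (\<lambda>i. share (2 * i + r mod 2) c)"
    by (cases "even r") (simp_all add: odd_iff_mod_2_eq_one)
  then show "(\<lambda>i. share (2 * i + r mod 2) c) \<longlonglongrightarrow> share_limit (r mod 2) c"
    by (simp add: share_limit_def convergent_LIMSEQ_iff)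
qed

lemma share_limit_rec:
  assumes "c \<in> C"
  shows "(\<Sum>x\<in>UNIV. share_limit (Suc r mod 2) (act [x] c)) = 4 * share_limit (r mod 2) c"
proof -
  have mod2: "(r + 3) mod 2 = Suc r mod 2" "(r + 4) mod 2 = r mod 2" "(r + 2) mod 2 = r mod 2"
    by presburger+
  have "(\<lambda>i. \<Sum>x\<in>UNIV. share (2 * i + (r + 3)) (act [x] c))
      \<longlonglongrightarrow> (\<Sum>x\<in>UNIV. share_limit (Suc r mod 2) (act [x] c))"
    using share_tendsto[OF act_mem_lcosets[OF assms], of "r + 3"] by (intro tendsto_sum) (simp add: mod2)
  moreover have "(\<Sum>x\<in>UNIV. share (2 * i + (r + 3)) (act [x] c))
      = 3 * share (2 * i + (r + 4)) c + share (2 * i + (r + 2)) c" for i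
  proof -
    have eqs: "Suc (2 * i + (r + 2)) = 2 * i + (r + 3)" "Suc (2 * i + (r + 3)) = 2 * i + (r + 4)"
      by simp_all
    have "1 \<le> 2 * i + (r + 2)"
      by simp
    from share_rec[OF this assms] show ?thesis
      by (simp only: eqs)
  qed
  moreover have "(\<lambda>i. 3 * share (2 * i + (r + 4)) c + share (2 * i + (r + 2)) c)
      \<longlonglongrightarrow> 3 * share_limit (r mod 2) c + share_limit (r mod 2) c"
    using share_tendsto[OF assms, of "r + 4"] share_tendsto[OF assms, of "r + 2"]
    by (intro tendsto_intros) (simp_all add: mod2)
  ultimately show ?thesis
    using LIMSEQ_unique by fastforce
qed

lemma sum_share: "(\<Sum>c\<in>C. share n c) = 1"
proof -
  have "sphere n = (\<Union>c\<in>C. c \<inter> sphere n)"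
    using lcoset_mem_lcosets mem_lcoset_self by (auto simp: sphere_def F2_def)
  moreover have "disjoint_family_on (\<lambda>c. c \<inter> sphere n) C"
    unfolding disjoint_family_on_def
  proof (intro ballI impI)
    fix c c' assume c: "c \<in> C" "c' \<in> C" "c \<noteq> c'"
    have "c = c'" if "w \<in> c" "w \<in> c'" "w \<in> sphere n" for w
      using that mem_iff_lcoset_eq[OF c(1)] mem_iff_lcoset_eq[OF c(2)] by (simp add: sphere_def F2_def)
    then show "c \<inter> sphere n \<inter> (c' \<inter> sphere n) = {}"
      using c(3) by blast
  qed
  ultimately have "card (sphere n) = (\<Sum>c\<in>C. card (c \<inter> sphere n))"
    by (metis card_UN_disjoint' finite_Int finite_lcosets finite_sphere)
  then show ?thesis
    using card_sphere_pos[of n] by (simp add: share_def sum_divide_distrib[symmetric] flip: of_nat_sum)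
qed

lemma sum_share_limit: "(\<Sum>c\<in>C. share_limit (r mod 2) c) = 1"
proof -
  have "(\<lambda>i. \<Sum>c\<in>C. share (2 * i + r) c) \<longlonglongrightarrow> (\<Sum>c\<in>C. share_limit (r mod 2) c)"
    using share_tendsto by (intro tendsto_sum) simp
  then show ?thesis
    by (simp add: sum_share LIMSEQ_const_iff)
qed

lemma lcosets_induct:
  assumes "c0 \<in> C" "P c0" and step: "\<And>c y. c \<in> C \<Longrightarrow> P c \<Longrightarrow> P (act [y] c)" and "c \<in> C"
  shows "P c"
proof -
  have "P (act u c0)" for u
  proof (induction u)
    case (Cons y u)
    then show ?case
      using step[OF act_mem_lcosets[OF assms(1)]] act_append[of "[y]" u] by simp
  qed (simp add: assms(2))
  then show ?thesis
    using act_transitive[OF assms(1,4)] by blast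
qed

lemma ex_max_on_lcosets: "\<exists>c0\<in>C. \<forall>c\<in>C. (g c :: real) \<le> g c0"
proof -
  obtain c0 where "c0 \<in> C" "g c0 = Max (g ` C)"
    using Max_in[of "g ` C"] finite_lcosets K_mem_lcosets by fastforce
  then show ?thesis
    using finite_lcosets by (metis Max_ge finite_imageI image_eqI)
qed

text \<open>Maximum principles on the Schreier graph of the cosets, which is connected.\<close>

lemma harmonic_imp_const:
  fixes g :: "letter list set \<Rightarrow> real"
  assumes harmonic: "\<And>c. c \<in> C \<Longrightarrow> (\<Sum>x\<in>UNIV. g (act [x] c)) = 4 * g c"
  shows "\<exists>M. \<forall>c\<in>C. g c = M"
proof -
  obtain c0 where c0: "c0 \<in> C" "\<forall>c\<in>C. g c \<le> g c0"
    using ex_max_on_lcosets by blast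
  have "g (act [y] c) = g c0" if "c \<in> C" "g c = g c0" for c y
    using sum_eq_card_mult_bound_imp_eq[where A = UNIV and f = "\<lambda>x. g (act [x] c)"]
      harmonic[OF that(1)] that c0(2) act_mem_lcosets card_UNIV_letter by simp
  then have "g c = g c0" if "c \<in> C" for c
    using lcosets_induct[of c0 "\<lambda>c. g c = g c0"] c0(1) that by blast
  then show ?thesis by blast
qed

lemma antiharmonic_imp_alternating:
  fixes g :: "letter list set \<Rightarrow> real"
  assumes antiharmonic: "\<And>c. c \<in> C \<Longrightarrow> (\<Sum>x\<in>UNIV. g (act [x] c)) = - 4 * g c" and "c \<in> C"
  shows "g (act [y] c) = - g c"
proof -
  obtain c0 where c0: "c0 \<in> C" "\<forall>c\<in>C. \<bar>g c\<bar> \<le> \<bar>g c0\<bar>"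
    using ex_max_on_lcosets[of "\<lambda>c. \<bar>g c\<bar>"] by blast
  have flip: "g (act [y] c) = - g c" if c: "c \<in> C" "\<bar>g c\<bar> = \<bar>g c0\<bar>" for c y
  proof -
    have bound: "\<bar>g (act [x] c)\<bar> \<le> \<bar>g c\<bar>" for x
      using c0(2) act_mem_lcosets[OF c(1)] c(2) by simp
    have sum: "(\<Sum>x\<in>UNIV. g (act [x] c)) = real (card (UNIV :: letter set)) * - g c"
      using antiharmonic[OF c(1)] by (simp add: card_UNIV_letter)
    show ?thesis
    proof (cases "g c \<ge> 0")
      case True
      have "- g (act [y] c) = g c"
      proof (rule sum_eq_card_mult_bound_imp_eq[where A = UNIV and f = "\<lambda>x. - g (act [x] c)"])
        show "- g (act [x] c) \<le> g c" for x
          using bound[of x] True by linarith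
      qed (use sum in \<open>simp_all add: sum_negf\<close>)
      then show ?thesis by simp
    next
      case False
      show ?thesis
      proof (rule sum_eq_card_mult_bound_imp_eq[where A = UNIV and f = "\<lambda>x. g (act [x] c)"])
        show "g (act [x] c) \<le> - g c" for x
          using bound[of x] False by linarith
      qed (use sum in simp_all)
    qed
  qed
  have "\<bar>g c\<bar> = \<bar>g c0\<bar>"
  proof (rule lcosets_induct[where P = "\<lambda>c. \<bar>g c\<bar> = \<bar>g c0\<bar>", OF c0(1) _ _ assms(2)])
    show "\<bar>g (act [y] c)\<bar> = \<bar>g c0\<bar>" if "c \<in> C" "\<bar>g c\<bar> = \<bar>g c0\<bar>" for c y
      using flip[OF that] that(2) by simp
  qed simp
  then show ?thesis
    using flip assms(2) by blast
qed

lemma share_limit_sum_const: "\<exists>M. \<forall>c\<in>C. share_limit 0 c + share_limit 1 c = M"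
  using share_limit_rec[of _ 0] share_limit_rec[of _ 1]
  by (intro harmonic_imp_const) (simp add: sum.distrib)

lemma share_limit_diff_act:
  "c \<in> C \<Longrightarrow> share_limit 0 (act [y] c) - share_limit 1 (act [y] c) = share_limit 1 c - share_limit 0 c"
  using share_limit_rec[of _ 0] share_limit_rec[of _ 1]
    antiharmonic_imp_alternating[of "\<lambda>c. share_limit 0 c - share_limit 1 c"]
  by (simp add: sum_subtractf)

lemma dens_eq_share:
  assumes "c \<in> C"
  shows "dens n h c = (share n c + share n (act [inv_letter h] c)) / 2"
proof -
  have sphere_F2: "act [inv_letter h] c \<inter> sphere n \<subseteq> F2" "sphere n \<subseteq> F2"
    by (auto simp: sphere_def)
  have "c \<inter> mul [h] ` sphere n = mul [h] ` act [inv_letter h] c \<inter> mul [h] ` sphere n"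
    using act_inv_cancel[OF assms, of "[inv_letter h]"] by (simp add: act_def)
  also have "\<dots> = mul [h] ` (act [inv_letter h] c \<inter> sphere n)"
    by (rule inj_on_image_Int[symmetric,
      OF inj_on_mul lcosets_subset_F2[OF act_mem_lcosets[OF assms]] sphere_F2(2)])
  finally have eq: "c \<inter> mul [h] ` sphere n = mul [h] ` (act [inv_letter h] c \<inter> sphere n)" .
  have card: "card (mul [h] ` (act [inv_letter h] c \<inter> sphere n)) = card (act [inv_letter h] c \<inter> sphere n)"
    by (intro card_image inj_on_subset[OF inj_on_mul sphere_F2(1)])
  show ?thesis
    unfolding dens_def share_def eq card by (simp add: add_divide_distrib)
qed

lemma share_limit_add_act:
  assumes "c \<in> C"
  shows "share_limit (r mod 2) c + share_limit (r mod 2) (act [y] c) = 2 / card C"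
proof -
  obtain M where M: "\<And>c. c \<in> C \<Longrightarrow> share_limit 0 c + share_limit 1 c = M"
    using share_limit_sum_const by blast
  have "(\<Sum>c\<in>C. share_limit 0 c + share_limit 1 c) = 2"
    using sum_share_limit[of 0] sum_share_limit[of 1] by (simp add: sum.distrib)
  moreover have "card C > 0"
    using finite_lcosets K_mem_lcosets card_gt_0_iff by blast
  ultimately have "M = 2 / card C"
    using M by (simp add: field_simps)
  moreover have "share_limit 0 c + share_limit 0 (act [y] c) = M"
    "share_limit 1 c + share_limit 1 (act [y] c) = M"
    using M[OF assms] M[OF act_mem_lcosets[OF assms, of "[y]"]] share_limit_diff_act[OF assms, of y]
    by linarith+
  ultimately show ?thesis
    by (cases "even r") (simp_all add: odd_iff_mod_2_eq_one)
qed

lemma dens_tendsto: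
  assumes "c \<in> C"
  shows "(\<lambda>i. dens (2 * i + r) h c) \<longlonglongrightarrow> 1 / card C"
proof -
  have "(\<lambda>i. (share (2 * i + r) c + share (2 * i + r) (act [inv_letter h] c)) / 2)
      \<longlonglongrightarrow> (share_limit (r mod 2) c + share_limit (r mod 2) (act [inv_letter h] c)) / 2"
    using assms act_mem_lcosets by (intro tendsto_intros share_tendsto) simp_all
  then show ?thesis
    by (simp add: dens_eq_share[OF assms] share_limit_add_act[OF assms])
qed

end

theorem corollary5p8:
  fixes K :: "letter list set" and h :: letter and z :: "letter list"
  assumes "is_subgroup K" and "finite (lcosets K)" and "z \<in> F2"
  shows "(\<lambda>n. dens n h (lcoset z K)) \<longlonglongrightarrow> 1 / real (index K)"
proof -
  interpret finite_index_subgroup K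
    using assms(1,2) by unfold_locales
  have "lcoset z K \<in> lcosets K"
    using assms(3) by (simp add: F2_def lcoset_mem_lcosets)
  then have "(\<lambda>i. dens (2 * i) h (lcoset z K)) \<longlonglongrightarrow> 1 / index K"
    "(\<lambda>i. dens (2 * i + 1) h (lcoset z K)) \<longlonglongrightarrow> 1 / index K"
    using dens_tendsto[of _ 0] dens_tendsto[of _ 1] by (simp_all add: index_def)
  then show ?thesis
    by (rule LIMSEQ_even_odd)
qed

end
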